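(* Let $p,q,N$ be positive integers and $\mathbf{C}=\begin{bmatrix}1 & p\\ q & 1+pq\end{bmatrix}$. The least period of the Cat map over $\mathbb{Z}_N$ is $T$ if and only if $T$ is the minimum positive integer $n$ satisfying $$p H_n\equiv 0,\quad qH_n\equiv 0,\quad \tfrac12 G_n-\tfrac12 pqH_n\equiv 1,\quad \tfrac12 G_n+\tfrac12 pqH_n\equiv 1 \pmod N.$$
   Context: The Cat map over $\mathbb{Z}_N$ is $v\mapsto \mathbf{C}v\bmod N$ on $\mathbb{Z}_N^2$; its least period is the least positive integer $n$ with $\mathbf{C}^nv\equiv v\pmod N$ for all $v\in\mathbb{Z}_N^2$. Put $A=pq+2$, $B=\sqrt{A^2-4}$, $G_n=\left(\frac{A+B}{2}\right)^n+\left(\frac{A-B}{2}\right)^n$, $H_n=\frac{1}{B}\left(\left(\frac{A+B}{2}\right)^n-\left(\frac{A-B}{2}\right)^n\right)$; $H_n$ and $\frac12G_n\pm\frac12pqH_n$ are integers (they are entries of $\mathbf{C}^n$). *)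

theory Defs
  imports "HOL-Analysis.Analysis"
begin

definition cat_mat :: "int \<Rightarrow> int \<Rightarrow> int^2^2" where
  "cat_mat p q = vector [vector [1, p], vector [q, 1 + p * q]]"

primrec cat_pow :: "int \<Rightarrow> int \<Rightarrow> nat \<Rightarrow> int^2^2" where
  "cat_pow p q 0 = mat 1"
| "cat_pow p q (Suc n) = cat_mat p q ** cat_pow p q n"

text \<open>n is a period of the Cat map over Z_N: C^n v = v (mod N) for all v in Z_N^2
  (vectors represented by integer vectors, congruence componentwise).\<close>
definition cat_is_period :: "int \<Rightarrow> int \<Rightarrow> int \<Rightarrow> nat \<Rightarrow> bool" where
  "cat_is_period p q N n \<longleftrightarrow>
     (\<forall>v :: int^2. \<forall>i. (cat_pow p q n *v v) $ i mod N = v $ i mod N)"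

definition cat_least_period :: "int \<Rightarrow> int \<Rightarrow> int \<Rightarrow> nat \<Rightarrow> bool" where
  "cat_least_period p q N T \<longleftrightarrow>
     0 < T \<and> cat_is_period p q N T \<and> (\<forall>m. 0 < m \<and> m < T \<longrightarrow> \<not> cat_is_period p q N m)"

definition catA :: "int \<Rightarrow> int \<Rightarrow> real" where
  "catA p q = of_int (p * q + 2)"

definition catB :: "int \<Rightarrow> int \<Rightarrow> real" where
  "catB p q = sqrt ((catA p q)^2 - 4)"

definition catG :: "int \<Rightarrow> int \<Rightarrow> nat \<Rightarrow> real" where
  "catG p q n = ((catA p q + catB p q) / 2) ^ n + ((catA p q - catB p q) / 2) ^ n"

definition catH :: "int \<Rightarrow> int \<Rightarrow> nat \<Rightarrow> real" where
  "catH p q n = (((catA p q + catB p q) / 2) ^ n - ((catA p q - catB p q) / 2) ^ n) / catB p q"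

text \<open>Congruence of real numbers modulo an integer N: x - y is an integer multiple of N.
  (Applied only to quantities that are integers.)\<close>
definition rcong :: "real \<Rightarrow> real \<Rightarrow> int \<Rightarrow> bool" where
  "rcong x y N \<longleftrightarrow> (\<exists>k::int. x - y = of_int k * of_int N)"

definition cat_cond :: "int \<Rightarrow> int \<Rightarrow> int \<Rightarrow> nat \<Rightarrow> bool" where
  "cat_cond p q N n \<longleftrightarrow>
     rcong (of_int p * catH p q n) 0 N \<and>
     rcong (of_int q * catH p q n) 0 N \<and>
     rcong (catG p q n / 2 - of_int (p * q) * catH p q n / 2) 1 N \<and>
     rcong (catG p q n / 2 + of_int (p * q) * catH p q n / 2) 1 N"

end

theory Submission
  imports Defs
begin

text \<open>Both eigenvalues (A \<plusminus> B)/2 of C satisfy x^2 = A x - 1, so G_n and H_n obey the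
  recurrences of the entries of C^n; induction identifies C^n with
  [[G_n/2 - pq H_n/2, p H_n], [q H_n, G_n/2 + pq H_n/2]]. Moreover C^n fixes every vector
  modulo N exactly when C^n \<equiv> I (mod N), as one sees on the unit vectors.\<close>

lemma matrix_vector_mult_nth_2:
  fixes M :: "'a::semiring_1^2^2" and v :: "'a^2"
  shows "(M *v v) $ 1 = M$1$1 * v$1 + M$1$2 * v$2"
    and "(M *v v) $ 2 = M$2$1 * v$1 + M$2$2 * v$2"
  by (simp_all add: matrix_vector_mult_def UNIV_2)

lemma cat_mat_mult_nth:
  fixes M :: "int^2^2"
  shows "(cat_mat p q ** M) $ 1 $ 1 = M$1$1 + p * M$2$1"
    and "(cat_mat p q ** M) $ 1 $ 2 = M$1$2 + p * M$2$2"
    and "(cat_mat p q ** M) $ 2 $ 1 = q * M$1$1 + (1 + p*q) * M$2$1"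
    and "(cat_mat p q ** M) $ 2 $ 2 = q * M$1$2 + (1 + p*q) * M$2$2"
  by (simp_all add: matrix_matrix_mult_def cat_mat_def UNIV_2 vector_def)

lemma catB_pos:
  assumes "p * q > 0"
  shows "catB p q > 0"
proof -
  have "(3::int) \<le> p * q + 2"
    using assms by simp
  then have "3 \<le> catA p q"
    unfolding catA_def by (metis of_int_le_iff of_int_numeral)
  then have "(3::real)^2 \<le> (catA p q)^2"
    by (intro power_mono) auto
  then show ?thesis
    unfolding catB_def by simp
qed

lemma catB_squared:
  assumes "p * q > 0"
  shows "(catB p q)^2 = (catA p q)^2 - 4"
  using catB_pos[OF assms] unfolding catB_def by simp

lemma catH_Suc:
  assumes "p * q > 0"
  shows "catH p q (Suc n) = catA p q / 2 * catH p q n + catG p q n / 2"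
  using catB_pos[OF assms] by (simp add: catH_def catG_def field_simps)

lemma catG_Suc:
  assumes "p * q > 0"
  shows "catG p q (Suc n) = catA p q / 2 * catG p q n + ((catA p q)^2 - 4) / 2 * catH p q n"
  using catB_pos[OF assms] unfolding catB_squared[OF assms, symmetric]
  by (simp add: catH_def catG_def field_simps power2_eq_square)

lemma cat_pow_nth:
  assumes "p * q > 0"
  shows "of_int (cat_pow p q n $ 1 $ 1) = catG p q n / 2 - of_int (p*q) * catH p q n / 2
    \<and> of_int (cat_pow p q n $ 1 $ 2) = of_int p * catH p q n
    \<and> of_int (cat_pow p q n $ 2 $ 1) = of_int q * catH p q n
    \<and> of_int (cat_pow p q n $ 2 $ 2) = catG p q n / 2 + of_int (p*q) * catH p q n / 2"
proof (induction n)
  case 0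
  show ?case by (simp add: catG_def catH_def mat_def)
next
  case (Suc n)
  then have ih: "of_int (cat_pow p q n $ 1 $ 1) = catG p q n / 2 - of_int (p*q) * catH p q n / 2"
    "of_int (cat_pow p q n $ 1 $ 2) = of_int p * catH p q n"
    "of_int (cat_pow p q n $ 2 $ 1) = of_int q * catH p q n"
    "of_int (cat_pow p q n $ 2 $ 2) = catG p q n / 2 + of_int (p*q) * catH p q n / 2"
    by blast+
  show ?case
    unfolding cat_pow.simps cat_mat_mult_nth of_int_add of_int_mult ih
      catH_Suc[OF assms] catG_Suc[OF assms] catA_def
    by (simp add: field_simps power2_eq_square)
qed

lemma fixes_all_vectors_mod_iff:
  fixes M :: "int^2^2" and N :: int
  shows "(\<forall>v :: int^2. \<forall>i. (M *v v) $ i mod N = v $ i mod N) \<longleftrightarrow>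
     M$1$1 mod N = 1 mod N \<and> M$1$2 mod N = 0 mod N \<and>
     M$2$1 mod N = 0 mod N \<and> M$2$2 mod N = 1 mod N"
    (is "?fixes_all \<longleftrightarrow> ?identity_mod")
proof
  assume fixes_all: ?fixes_all
  have "(M *v vector [1, 0]) $ i mod N = (vector [1, 0] :: int^2) $ i mod N"
    and "(M *v vector [0, 1]) $ i mod N = (vector [0, 1] :: int^2) $ i mod N" for i
    using fixes_all by blast+
  from this[of 1] this[of 2] show ?identity_mod
    by (simp add: matrix_vector_mult_nth_2 vector_def)
next
  assume ?identity_mod
  have row_cong: "(a*x + b*y) mod N = (a'*x + b'*y) mod N"
    if "a mod N = a' mod N" "b mod N = b' mod N" for a a' b b' x y :: int
    using that by (metis mod_add_cong mod_mult_cong)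
  show ?fixes_all
  proof (intro allI)
    fix v :: "int^2" and i :: 2
    have "(M *v v) $ 1 mod N = (1 * v$1 + 0 * v$2) mod N"
      and "(M *v v) $ 2 mod N = (0 * v$1 + 1 * v$2) mod N"
      unfolding matrix_vector_mult_nth_2 using \<open>?identity_mod\<close> by (intro row_cong; simp)+
    then show "(M *v v) $ i mod N = v $ i mod N"
      using exhaust_2[of i] by auto
  qed
qed

lemma rcong_of_int_iff: "rcong (of_int a) (of_int b) N \<longleftrightarrow> a mod N = b mod N"
proof -
  have "rcong (of_int a) (of_int b) N \<longleftrightarrow> (\<exists>k. a - b = k * N)"
    unfolding rcong_def by (metis of_int_diff of_int_eq_iff of_int_mult)
  also have "\<dots> \<longleftrightarrow> a mod N = b mod N"
    by (metis mod_eq_dvd_iff dvd_def mult.commute)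
  finally show ?thesis .
qed

lemma cat_is_period_iff_cat_cond:
  assumes "p * q > 0"
  shows "cat_is_period p q N n \<longleftrightarrow> cat_cond p q N n"
proof -
  have "cat_cond p q N n \<longleftrightarrow>
     rcong (of_int (cat_pow p q n $ 1 $ 2)) (of_int 0) N \<and>
     rcong (of_int (cat_pow p q n $ 2 $ 1)) (of_int 0) N \<and>
     rcong (of_int (cat_pow p q n $ 1 $ 1)) (of_int 1) N \<and>
     rcong (of_int (cat_pow p q n $ 2 $ 2)) (of_int 1) N"
    unfolding cat_cond_def using cat_pow_nth[OF assms, of n] by simp
  then show ?thesis
    unfolding cat_is_period_def fixes_all_vectors_mod_iff rcong_of_int_iff by blast
qed

theorem proposition1:
  fixes p q N :: int and T :: nat
  assumes "p > 0" and "q > 0" and "N > 0"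
  shows "cat_least_period p q N T \<longleftrightarrow>
           (0 < T \<and> cat_cond p q N T \<and> (\<forall>n. 0 < n \<and> n < T \<longrightarrow> \<not> cat_cond p q N n))"
proof -
  have "p * q > 0"
    using assms(1,2) by simp
  then show ?thesis
    unfolding cat_least_period_def using cat_is_period_iff_cat_cond by simp
qed

end
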